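(* In the general setting of the context, let $(x_1^*,\dots,x_n^* )$ be an optimal solution attaining $P^*$ together with a vector $y^*\in\mathbb{R}^m_+$ such that $y^*_i=0$ whenever $(\sum_tA_tx^*_t)_i<b_i$ and $A_t^\top y^*$ is a supergradient of $f_t$ at $x_t^*$ for every $t$. For $t\in[n]$ let $$S_t=\frac{1}{n-t+1}\sum_{s=t}^nf_{\sigma(s)}(x^*_{\sigma(s)})-\frac{P^*}{n}.$$ Then $$\mathbb{P}\Big(\exists\,t\in[n(1-\epsilon)]:\ S_t<-\frac{P^*}{n}2^{-\kappa(t)/2}\epsilon^{1/2}\Big)\le L\exp\Big(-\frac{\epsilon^2}{4\gamma}\Big).$$
   Context: General setting. Let $m,k,n$ be positive integers and $b\in\mathbb{R}^m_{++}$. Let $\mathcal G$ be the set of proper, concave, upper semicontinuous functions $f:\mathbb{R}^k\to[-\infty,\infty)$ with bounded superlevel sets such that $\mathrm{dom} f\subset\mathbb{R}^k_+$ and $f(0)=0$. Let $f_1,\dots,f_n\in\mathcal G$ and $A_1,\dots,A_n\in\mathbb{R}_+^{m\times k}$. Let $P^*=\sup\{\sum_{t=1}^n f_t(x_t): x_t\in\mathbb{R}^k,\ \sum_{t=1}^n A_tx_t\le b\}$ and assume $P^*>0$. Let $\gamma>0$ satisfy, for every $t\in[n]$: $(A_tx)_i/b_i\le\gamma$ for all $i\in[m]$ and all $x$ with $f_t(x)\ge0$, and $f_t(x)\le\gamma P^*$ for all $x\in\mathrm{dom} f_t$. Let $\epsilon\in(0,1)$ be such that $L=\log_2(1/\epsilon)$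 and $n\epsilon$ are integers. Let $\sigma$ be a uniformly random permutation of $[n]$; probabilities are over $\sigma$. For $t\in[n(1-\epsilon)]$, $\kappa(t)=\lfloor\log_2\frac{n-t}{n\epsilon}\rfloor+1$, i.e. $\kappa(t)=k\in[L]$ iff $n(1-2^k\epsilon)<t\le n(1-2^{k-1}\epsilon)$. *)

theory Defs
  imports "HOL-Analysis.Analysis" "HOL-Probability.Probability"
begin

text \<open>Functions R^k -> [-infinity, infinity) are modelled as maps into ereal that
  never take the value +infinity.  The effective domain is the set where the value
  is not -infinity.\<close>

definition hypo :: "('a \<Rightarrow> ereal) \<Rightarrow> ('a \<times> real) set" where
  "hypo f = {(x, r). ereal r \<le> f x}"

definition proper_concave_fn :: "('a::real_vector \<Rightarrow> ereal) \<Rightarrow> bool" where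
  "proper_concave_fn f \<longleftrightarrow> (\<forall>x. f x \<noteq> \<infinity>) \<and> (\<exists>x. f x \<noteq> -\<infinity>) \<and> convex (hypo f)"

definition usc_fn :: "('a::topological_space \<Rightarrow> ereal) \<Rightarrow> bool" where
  "usc_fn f \<longleftrightarrow> (\<forall>c::ereal. closed {x. c \<le> f x})"

definition bounded_superlevel :: "('a::metric_space \<Rightarrow> ereal) \<Rightarrow> bool" where
  "bounded_superlevel f \<longleftrightarrow> (\<forall>c::real. bounded {x. ereal c \<le> f x})"

definition edom :: "('a \<Rightarrow> ereal) \<Rightarrow> 'a set" where
  "edom f = {x. f x \<noteq> -\<infinity>}"

definition classG :: "(real^'k \<Rightarrow> ereal) \<Rightarrow> bool" where
  "classG f \<longleftrightarrow> proper_concave_fn f \<and> usc_fn f \<and> bounded_superlevel f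
     \<and> edom f \<subseteq> {x. \<forall>i. 0 \<le> x $ i} \<and> f 0 = 0"

definition feasible :: "nat \<Rightarrow> (nat \<Rightarrow> real^'k^'m) \<Rightarrow> real^'m \<Rightarrow> (nat \<Rightarrow> real^'k) \<Rightarrow> bool" where
  "feasible n A b x \<longleftrightarrow> (\<forall>i. (\<Sum>t\<in>{1..n}. A t *v x t) $ i \<le> b $ i)"

definition Pstar :: "nat \<Rightarrow> (nat \<Rightarrow> real^'k \<Rightarrow> ereal) \<Rightarrow> (nat \<Rightarrow> real^'k^'m) \<Rightarrow> real^'m \<Rightarrow> ereal" where
  "Pstar n f A b = (SUP x \<in> {x. feasible n A b x}. \<Sum>t\<in>{1..n}. f t (x t))"

definition kappa :: "nat \<Rightarrow> real \<Rightarrow> nat \<Rightarrow> int" where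
  "kappa n \<epsilon> t = \<lfloor>log 2 ((real n - real t) / (real n * \<epsilon>))\<rfloor> + 1"

definition S_stat :: "nat \<Rightarrow> (nat \<Rightarrow> real^'k \<Rightarrow> ereal) \<Rightarrow> (nat \<Rightarrow> real^'k) \<Rightarrow> real \<Rightarrow> (nat \<Rightarrow> nat) \<Rightarrow> nat \<Rightarrow> real" where
  "S_stat n f xs P \<sigma> t =
     (1 / (real n - real t + 1)) * (\<Sum>s\<in>{t..n}. real_of_ereal (f (\<sigma> s) (xs (\<sigma> s)))) - P / real n"

end

theory Submission
  imports Defs "HOL-Combinatorics.Multiset_Permutations"
begin

text \<open>Write \<open>v t = f t (xs t)\<close>.  Optimality alone makes these values finite with sum \<open>P\<close>,
  and nonnegative because switching off one agent keeps the solution feasible; the bound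
  \<open>\<gamma> P\<close> caps them.  The event \<open>S_t < \<dots>\<close> says that,
  in the random order, the suffix starting at position \<open>t\<close> has mean below \<open>P / n - \<delta>_k\<close>
  with \<open>k = \<kappa>(t)\<close>, and such suffixes have length at least \<open>2^(k-1) n \<epsilon> + 1\<close>.  Suffix means
  of a random permutation form a reverse martingale, so a maximal inequality (stopping at
  the longest low suffix, then Jensen) reduces the probability that some long suffix is low
  to an exponential moment of a sum sampled without replacement, which a Bernstein-type
  estimate bounds by \<open>exp (- \<epsilon>\<^sup>2 / (4 \<gamma>))\<close>.  A union bound over \<open>k \<in> [L]\<close> finishes.\<close>

lemma sum_permutations_of_set_Cons:
  assumes "finite W" "W \<noteq> {}"
  shows "(\<Sum>ls\<in>permutations_of_set W. F ls) = (\<Sum>x\<in>W. \<Sum>ls\<in>permutations_of_set (W - {x}). F (x # ls))"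
proof -
  have "(\<Sum>ls\<in>permutations_of_set W. F ls)
      = (\<Sum>ls\<in>(\<Union>x\<in>W. (#) x ` permutations_of_set (W - {x})). F ls)"
    using permutations_of_set_nonempty[OF assms(2)] by simp
  also have "\<dots> = (\<Sum>x\<in>W. \<Sum>ls\<in>(#) x ` permutations_of_set (W - {x}). F ls)"
    by (rule sum.UNION_disjoint) (use assms(1) in auto)
  also have "\<dots> = (\<Sum>x\<in>W. \<Sum>ls\<in>permutations_of_set (W - {x}). F (x # ls))"
    by (rule sum.cong[OF refl], subst sum.reindex) (auto simp: inj_on_def)
  finally show ?thesis .
qed

lemma sum_list_map_permutation:
  "ls \<in> permutations_of_set W \<Longrightarrow> sum_list (map v ls) = sum v W"
  by (auto simp: permutations_of_set_def sum_list_distinct_conv_sum_set)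

lemma card_permutations_of_set_remove:
  "finite W \<Longrightarrow> x \<in> W \<Longrightarrow> ls \<in> permutations_of_set (W - {x}) \<Longrightarrow> Suc (length ls) = card W"
proof -
  assume "finite W" "x \<in> W" "ls \<in> permutations_of_set (W - {x})"
  then have "length ls = card W - 1" "card W > 0"
    by (auto simp: length_finite_permutations_of_set card_gt_0_iff)
  then show "Suc (length ls) = card W" by simp
qed

lemma card_mult_exp_mean_le_sum_exp:
  fixes z :: "'a \<Rightarrow> real"
  assumes "finite W" "W \<noteq> {}"
  shows "card W * exp (sum z W / card W) \<le> (\<Sum>x\<in>W. exp (z x))"
proof -
  define c where "c = sum z W / card W"
  have "exp c * (1 + (z x - c)) \<le> exp (z x)" for x
    using mult_left_mono[OF exp_ge_add_one_self[of "z x - c"], of "exp c"] by (simp add: exp_diff)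
  then have "(\<Sum>x\<in>W. exp c * (1 + (z x - c))) \<le> (\<Sum>x\<in>W. exp (z x))"
    by (rule sum_mono)
  moreover have "(\<Sum>x\<in>W. exp c * (1 + (z x - c))) = exp c * (card W + sum z W - card W * c)"
    by (simp add: sum_distrib_left[symmetric] sum.distrib sum_subtractf)
  moreover have "card W * c = sum z W"
    using assms by (simp add: c_def card_gt_0_iff)
  ultimately show ?thesis by (simp add: c_def mult.commute)
qed

definition tail_sum :: "('a \<Rightarrow> real) \<Rightarrow> nat \<Rightarrow> 'a list \<Rightarrow> real" where
  "tail_sum v a ls = sum_list (map v (drop (length ls - a) ls))"

fun low_suffix_mean :: "('a \<Rightarrow> real) \<Rightarrow> nat \<Rightarrow> real \<Rightarrow> 'a list \<Rightarrow> bool" where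
  "low_suffix_mean v a thr [] = False"
| "low_suffix_mean v a thr (x # xs) \<longleftrightarrow>
     a \<le> Suc (length xs) \<and> sum_list (map v (x # xs)) < thr * Suc (length xs) \<or> low_suffix_mean v a thr xs"

lemma tail_sum_Cons: "a \<le> length ls \<Longrightarrow> tail_sum v a (x # ls) = tail_sum v a ls"
  by (simp add: tail_sum_def Suc_diff_le)

lemma tail_sum_rev: "tail_sum v a (rev ls) = sum_list (map v (take a ls))"
  by (simp add: tail_sum_def rev_take[symmetric] rev_map[symmetric])

lemma not_low_suffix_mean_short: "length ls < a \<Longrightarrow> \<not> low_suffix_mean v a thr ls"
  by (induction ls) auto

lemma low_suffix_meanI:
  fixes v :: "'a \<Rightarrow> real" and thr :: real
  shows "j < length ls \<Longrightarrow> a \<le> length ls - j \<Longrightarrow> sum_list (map v (drop j ls)) < thr * (length ls - j)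
    \<Longrightarrow> low_suffix_mean v a thr ls"
proof (induction ls arbitrary: j)
  case (Cons x xs)
  then show ?case by (cases j) auto
qed simp

text \<open>Jensen's inequality for the mean of \<open>exp (- \<eta> * tail_sum v a ls)\<close> over all orderings:
  the tail sum has mean \<open>a\<close> times the overall mean.\<close>
lemma sum_exp_tail_sum_ge:
  fixes v :: "'a \<Rightarrow> real"
  assumes "finite W" "1 \<le> a" "a \<le> card W"
  shows "fact (card W) * exp (- \<eta> * a * sum v W / card W)
     \<le> (\<Sum>ls\<in>permutations_of_set W. exp (- \<eta> * tail_sum v a ls))"
  using assms
proof (induction "card W" arbitrary: W rule: less_induct)
  case less
  show ?case
  proof (cases "card W = a")
    case True
    then have "tail_sum v a ls = sum v W" if "ls \<in> permutations_of_set W" for ls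
      using that by (simp add: tail_sum_def length_finite_permutations_of_set sum_list_map_permutation)
    with True less.prems show ?thesis by simp
  next
    case False
    define M where "M = card W - 1"
    have W: "W \<noteq> {}" "card W = Suc M" "a \<le> M"
      using False less.prems by (auto simp: M_def)
    have card_remove: "card (W - {x}) = M" if "x \<in> W" for x
      using that less.prems(1) by (simp add: M_def)
    define z where "z x = - \<eta> * a / M * sum v (W - {x})" for x
    have "(\<Sum>x\<in>W. sum v (W - {x})) = card W * sum v W - sum v W"
      using less.prems(1) by (simp add: sum_diff1 sum_subtractf)
    then have "sum z W = - \<eta> * a / M * (M * sum v W)"
      unfolding z_def sum_distrib_left[symmetric] using W by (simp add: field_simps)
    then have mean_z: "sum z W / card W = - \<eta> * a * sum v W / card W"
      using W less.prems(2) by simp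
    have "fact (card W) * exp (- \<eta> * a * sum v W / card W)
        = fact M * (card W * exp (sum z W / card W))"
      using W mean_z by simp
    also have "\<dots> \<le> fact M * (\<Sum>x\<in>W. exp (z x))"
      using card_mult_exp_mean_le_sum_exp[OF less.prems(1) W(1)] by (simp add: mult_left_mono)
    also have "\<dots> \<le> (\<Sum>x\<in>W. \<Sum>ls\<in>permutations_of_set (W - {x}). exp (- \<eta> * tail_sum v a ls))"
      unfolding sum_distrib_left
    proof (intro sum_mono)
      fix x assume "x \<in> W"
      then have "fact (card (W - {x})) * exp (- \<eta> * a * sum v (W - {x}) / card (W - {x}))
          \<le> (\<Sum>ls\<in>permutations_of_set (W - {x}). exp (- \<eta> * tail_sum v a ls))"
        using card_remove W less.prems by (intro less.hyps) auto
      moreover have "z x = - \<eta> * a * sum v (W - {x}) / M"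
        by (simp add: z_def)
      ultimately show "fact M * exp (z x) \<le> (\<Sum>ls\<in>permutations_of_set (W - {x}). exp (- \<eta> * tail_sum v a ls))"
        using card_remove[OF \<open>x \<in> W\<close>] by simp
    qed
    also have "\<dots> = (\<Sum>x\<in>W. \<Sum>ls\<in>permutations_of_set (W - {x}). exp (- \<eta> * tail_sum v a (x # ls)))"
      using card_remove W by (intro sum.cong refl) (simp add: tail_sum_Cons length_finite_permutations_of_set)
    also have "\<dots> = (\<Sum>ls\<in>permutations_of_set W. exp (- \<eta> * tail_sum v a ls))"
      by (rule sum_permutations_of_set_Cons[symmetric, OF less.prems(1) W(1)])
    finally show ?thesis .
  qed
qed

lemma fact_le_exp_mult_sum_exp_tail_sum:
  fixes v :: "'a \<Rightarrow> real" and thr :: real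
  assumes "finite W" "1 \<le> a" "a \<le> card W" "0 \<le> \<eta>" "sum v W < thr * card W"
  shows "fact (card W) \<le> exp (\<eta> * a * thr) * (\<Sum>ls\<in>permutations_of_set W. exp (- \<eta> * tail_sum v a ls))"
proof -
  have "sum v W / card W < thr"
    using assms by (simp add: divide_less_eq)
  then have "\<eta> * a * (sum v W / card W) \<le> \<eta> * a * thr"
    using assms(4) by (intro mult_left_mono) auto
  then have "1 \<le> exp (\<eta> * a * thr) * exp (- \<eta> * a * sum v W / card W)"
    by (simp add: exp_add[symmetric])
  then have "fact (card W) \<le> exp (\<eta> * a * thr) * (fact (card W) * exp (- \<eta> * a * sum v W / card W))"
    using mult_left_mono[of 1 _ "fact (card W)"] by (simp add: ac_simps)
  also have "\<dots> \<le> exp (\<eta> * a * thr) * (\<Sum>ls\<in>permutations_of_set W. exp (- \<eta> * tail_sum v a ls))"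
    using sum_exp_tail_sum_ge[OF assms(1-3)] by simp
  finally show ?thesis .
qed

lemma sum_permutations_of_set_low_suffix_mean_Cons:
  fixes v :: "'a \<Rightarrow> real" and thr :: real and F :: "bool \<Rightarrow> 'b::comm_monoid_add"
  assumes "finite W" "W \<noteq> {}" "\<not> sum v W < thr * card W"
  shows "(\<Sum>ls\<in>permutations_of_set W. F (low_suffix_mean v a thr ls))
       = (\<Sum>x\<in>W. \<Sum>ls\<in>permutations_of_set (W - {x}). F (low_suffix_mean v a thr ls))"
proof -
  have "low_suffix_mean v a thr (x # ls) = low_suffix_mean v a thr ls"
    if "x \<in> W" "ls \<in> permutations_of_set (W - {x})" for x ls
  proof -
    have "x # ls \<in> permutations_of_set W"
      using that by (auto simp: permutations_of_set_def)
    then have "sum_list (map v (x # ls)) = sum v W"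
      by (rule sum_list_map_permutation)
    then show ?thesis
      using assms(3) card_permutations_of_set_remove[OF assms(1) that] by (simp del: list.map)
  qed
  then show ?thesis
    by (simp add: sum_permutations_of_set_Cons[OF assms(1,2)])
qed

text \<open>A maximal inequality for the reverse martingale of suffix means: the first
  (longest) low suffix is a stopping time, and at that time Jensen's inequality applies.\<close>
lemma count_low_suffix_mean_le:
  fixes v :: "'a \<Rightarrow> real"
  assumes "finite W" "1 \<le> a" "0 \<le> \<eta>"
  shows "(\<Sum>ls\<in>permutations_of_set W. if low_suffix_mean v a thr ls then 1 else 0 :: real)
     \<le> exp (\<eta> * a * thr) * (\<Sum>ls\<in>permutations_of_set W. exp (- \<eta> * tail_sum v a ls))"
  using assms(1)
proof (induction "card W" arbitrary: W rule: less_induct)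
  case less
  let ?count = "\<lambda>W. \<Sum>ls\<in>permutations_of_set W. if low_suffix_mean v a thr ls then 1 else 0 :: real"
  let ?bound = "\<lambda>W. exp (\<eta> * a * thr) * (\<Sum>ls\<in>permutations_of_set W. exp (- \<eta> * tail_sum v a ls))"
  have bound_nonneg: "0 \<le> ?bound W"
    by (simp add: sum_nonneg)
  consider "card W < a" | "a \<le> card W" "sum v W < thr * card W" | "a \<le> card W" "\<not> sum v W < thr * card W"
    by linarith
  then show ?case
  proof cases
    case 1
    then have "?count W = 0"
      by (simp add: not_low_suffix_mean_short length_finite_permutations_of_set)
    with bound_nonneg show ?thesis by simp
  next
    case 2
    have "?count W \<le> (\<Sum>ls\<in>permutations_of_set W. 1)"
      by (intro sum_mono) simp
    also have "\<dots> = fact (card W)"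
      using less.prems by simp
    also have "\<dots> \<le> ?bound W"
      using fact_le_exp_mult_sum_exp_tail_sum[OF less.prems assms(2) 2(1) assms(3) 2(2)] .
    finally show ?thesis .
  next
    case 3
    have W: "W \<noteq> {}"
      using 3(1) assms(2) by auto
    have "?count W = (\<Sum>x\<in>W. ?count (W - {x}))"
      by (rule sum_permutations_of_set_low_suffix_mean_Cons[OF less.prems W 3(2)])
    show ?thesis
    proof (cases "card W = a")
      case True
      have "?count (W - {x}) = 0" if "x \<in> W" for x
      proof (intro sum.neutral ballI)
        fix ls assume "ls \<in> permutations_of_set (W - {x})"
        then have "length ls < a"
          using card_permutations_of_set_remove[OF less.prems that] True by fastforce
        then show "(if low_suffix_mean v a thr ls then 1 else 0) = (0::real)"
          by (simp add: not_low_suffix_mean_short)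
      qed
      with \<open>?count W = _\<close> bound_nonneg show ?thesis by simp
    next
      case False
      have tail_sum_eq: "tail_sum v a (x # ls) = tail_sum v a ls"
        if "x \<in> W" "ls \<in> permutations_of_set (W - {x})" for x ls
        using False 3(1) card_permutations_of_set_remove[OF less.prems that] by (intro tail_sum_Cons) simp
      have "?count W \<le> (\<Sum>x\<in>W. ?bound (W - {x}))"
        unfolding \<open>?count W = _\<close> using less.prems W by (intro sum_mono less.hyps) (auto simp: card_gt_0_iff)
      also have "\<dots> = ?bound W"
        using tail_sum_eq
        by (simp add: sum_distrib_left[symmetric] sum_permutations_of_set_Cons[OF less.prems W])
      finally show ?thesis .
    qed
  qed
qed

lemma exp_neg_le_quadratic:
  assumes "0 \<le> (z::real)"
  shows "exp (- z) \<le> 1 - z + z\<^sup>2 / 2"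
proof -
  define g where "g z = 1 - z + z\<^sup>2 / 2 - exp (- z)" for z :: real
  have "g 0 \<le> g z"
  proof (rule DERIV_nonneg_imp_nondecreasing[OF assms])
    fix x :: real assume "0 \<le> x"
    have "(g has_real_derivative (x - 1 + exp (- x))) (at x)"
      unfolding g_def by (auto intro!: derivative_eq_intros simp: power2_eq_square)
    moreover have "0 \<le> x - 1 + exp (- x)"
      using exp_ge_add_one_self[of "- x"] by simp
    ultimately show "\<exists>y. (g has_real_derivative y) (at x) \<and> 0 \<le> y" by blast
  qed
  then show ?thesis by (simp add: g_def)
qed

lemma exp_neg_mult_le_linear:
  fixes d \<eta> c x :: real
  assumes "0 \<le> d" "d \<le> \<eta>" "0 \<le> x" "x \<le> c"
  shows "exp (- d * x) \<le> 1 - d * (1 - \<eta> * c / 2) * x"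
proof -
  have "d * d \<le> d * \<eta>" "x * x \<le> c * x"
    using assms by (auto intro: mult_left_mono mult_right_mono)
  then have "(d * d) * (x * x) \<le> (d * \<eta>) * (c * x)"
    using assms by (intro mult_mono) auto
  then have "(d * x)\<^sup>2 \<le> d * \<eta> * (c * x)"
    by (simp add: power2_eq_square algebra_simps)
  then show ?thesis
    using exp_neg_le_quadratic[of "d * x"] assms by (simp add: algebra_simps)
qed

lemma sum_exp_neg_le_card_mult_exp_mean:
  fixes v :: "'a \<Rightarrow> real" and c d \<eta> :: real
  assumes "finite W" "W \<noteq> {}" "0 \<le> d" "d \<le> \<eta>" "\<And>x. 0 \<le> v x" "\<And>x. v x \<le> c"
  shows "(\<Sum>x\<in>W. exp (- d * v x)) \<le> card W * exp (- (d * (1 - \<eta> * c / 2)) * sum v W / card W)"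
proof -
  define \<rho> where "\<rho> = d * (1 - \<eta> * c / 2)"
  have "(\<Sum>x\<in>W. exp (- d * v x)) \<le> (\<Sum>x\<in>W. 1 - \<rho> * v x)"
    unfolding \<rho>_def using assms by (intro sum_mono exp_neg_mult_le_linear) auto
  also have "\<dots> = card W - \<rho> * sum v W"
    by (simp add: sum_subtractf sum_distrib_left)
  also have "\<dots> = card W * (1 + (- \<rho> * sum v W / card W))"
    using assms(1,2) by (simp add: field_simps)
  also have "\<dots> \<le> card W * exp (- \<rho> * sum v W / card W)"
    by (intro mult_left_mono exp_ge_add_one_self) auto
  finally show ?thesis
    by (simp add: \<rho>_def)
qed

text \<open>A Bernstein-type bound for sampling without replacement.  Conditioning on the head
  entry, the induction hypothesis leaves an exponential moment of a single sampled value.\<close>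
lemma sum_exp_prefix_sum_le:
  fixes v :: "'a \<Rightarrow> real" and c \<eta> :: real
  assumes "0 \<le> \<eta>" "\<eta> * c \<le> 1" and v: "\<And>x. 0 \<le> v x" "\<And>x. v x \<le> c"
  shows "finite W \<Longrightarrow> r \<le> card W \<Longrightarrow>
    (\<Sum>ls\<in>permutations_of_set W. exp (- \<eta> * sum_list (map v (take r ls))))
      \<le> fact (card W) * exp (- real r * (\<eta> * (1 - \<eta> * c / 2)) * sum v W / card W)"
proof (induction r arbitrary: W)
  case (Suc r)
  define \<kappa> where "\<kappa> = \<eta> * (1 - \<eta> * c / 2)"
  define N M S where "N = card W" and "M = card W - 1" and "S = sum v W"
  have c: "0 \<le> c"
    using v[of undefined] by linarith
  have W: "W \<noteq> {}" "N = Suc M" "r \<le> M"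
    using Suc.prems by (auto simp: N_def M_def)
  have S: "0 \<le> S"
    unfolding S_def using v by (simp add: sum_nonneg)
  have "\<eta> * (\<eta> * c) \<le> \<eta> * 2"
    using assms by (intro mult_left_mono) auto
  then have \<kappa>: "0 \<le> \<kappa>" "\<kappa> \<le> \<eta>"
    unfolding \<kappa>_def using assms c by (auto simp: algebra_simps)
  \<comment> \<open>the induction hypothesis gives back \<open>exp (y * v x)\<close> on the head value\<close>
  define y where "y = r * \<kappa> / M"
  have "r * \<kappa> / M \<le> \<kappa>"
    using \<kappa> W by (cases "M = 0") (auto simp: field_simps mult_left_mono)
  then have y: "0 \<le> y" "y \<le> \<eta>" "y * M = r * \<kappa>"
    using \<kappa> W by (auto simp: y_def)
  define \<rho> where "\<rho> = (\<eta> - y) * (1 - \<eta> * c / 2)"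
  have IH: "(\<Sum>ls\<in>permutations_of_set (W - {x}). exp (- \<eta> * sum_list (map v (take r ls))))
      \<le> fact M * exp (- real r * \<kappa> * (S - v x) / M)" if "x \<in> W" for x
    using Suc.IH[of "W - {x}"] Suc.prems that W(2)
    by (simp add: \<kappa>_def S_def N_def M_def sum_diff1)
  have "(\<Sum>ls\<in>permutations_of_set W. exp (- \<eta> * sum_list (map v (take (Suc r) ls))))
     = (\<Sum>x\<in>W. exp (- \<eta> * v x) *
          (\<Sum>ls\<in>permutations_of_set (W - {x}). exp (- \<eta> * sum_list (map v (take r ls)))))"
    by (simp add: sum_permutations_of_set_Cons[OF Suc.prems(1) W(1)] sum_distrib_left algebra_simps
        exp_add[symmetric])
  also have "\<dots> \<le> (\<Sum>x\<in>W. exp (- \<eta> * v x) * (fact M * exp (- real r * \<kappa> * (S - v x) / M)))"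
    using IH by (intro sum_mono mult_left_mono) auto
  also have "\<dots> = fact M * exp (- y * S) * (\<Sum>x\<in>W. exp (- (\<eta> - y) * v x))"
    by (simp add: sum_distrib_left y_def exp_add[symmetric] algebra_simps diff_divide_distrib)
  also have "\<dots> \<le> fact M * exp (- y * S) * (N * exp (- \<rho> * S / N))"
    unfolding \<rho>_def N_def S_def
    using sum_exp_neg_le_card_mult_exp_mean[OF Suc.prems(1) W(1), of "\<eta> - y" \<eta> v c] y v
    by (intro mult_left_mono) auto
  also have "fact M * exp (- y * S) * (N * exp (- \<rho> * S / N)) = fact N * exp (- (y * N + \<rho>) * S / N)"
  proof -
    have "fact M * exp (- y * S) * (N * exp (- \<rho> * S / N)) = (real N * fact M) * exp (- y * S + - \<rho> * S / N)"
      unfolding exp_add by (simp only: mult_ac)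
    also have "- y * S + - \<rho> * S / N = - (y * N + \<rho>) * S / N"
      using W by (simp add: field_simps)
    also have "real N * fact M = fact N"
      using W by simp
    finally show ?thesis .
  qed
  also have "\<dots> \<le> fact N * exp (- real (Suc r) * \<kappa> * S / N)"
  proof -
    have "y * N + \<rho> = r * \<kappa> + \<kappa> + y * (\<eta> * c / 2)"
    proof -
      have "y * N = r * \<kappa> + y"
        using W y(3) by (simp add: algebra_simps)
      then show ?thesis
        by (simp add: \<rho>_def \<kappa>_def field_simps)
    qed
    then have "Suc r * \<kappa> \<le> y * N + \<rho>"
      using y assms c by (simp add: algebra_simps)
    then have "Suc r * \<kappa> * S / N \<le> (y * N + \<rho>) * S / N"
      using S by (intro divide_right_mono mult_right_mono) auto
    then have "- (y * N + \<rho>) * S / N \<le> - real (Suc r) * \<kappa> * S / N"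
      by (simp only: mult_minus_left minus_divide_left neg_le_iff_le)
    then show ?thesis
      by (intro mult_left_mono) auto
  qed
  finally show ?case
    by (simp add: \<kappa>_def S_def N_def mult_left_mono)
qed simp

lemma sum_tail_sum_eq_sum_prefix_sum:
  "(\<Sum>ls\<in>permutations_of_set W. F (tail_sum v a ls))
     = (\<Sum>ls\<in>permutations_of_set W. F (sum_list (map v (take a ls))))"
proof -
  have "(\<Sum>ls\<in>permutations_of_set W. F (tail_sum v a ls))
      = (\<Sum>ls\<in>rev ` permutations_of_set W. F (tail_sum v a ls))"
    by simp
  also have "\<dots> = (\<Sum>ls\<in>permutations_of_set W. F (sum_list (map v (take a ls))))"
    by (subst sum.reindex) (auto simp: inj_on_def tail_sum_rev)
  finally show ?thesis .
qed

text \<open>Maximal inequality plus Bernstein bound, at the optimal \<open>\<eta> = \<delta> / (c \<mu>)\<close>.\<close>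
lemma card_low_suffix_mean_le:
  fixes W :: "'a set" and v :: "'a \<Rightarrow> real" and c \<delta> :: real
  defines "\<mu> \<equiv> sum v W / card W"
  assumes "finite W" and v: "\<And>x. 0 \<le> v x" "\<And>x. v x \<le> c"
    and "0 < c" "0 < \<mu>" "1 \<le> a" "0 \<le> \<delta>" "\<delta> \<le> \<mu>"
  shows "card {ls \<in> permutations_of_set W. low_suffix_mean v a (\<mu> - \<delta>) ls}
      \<le> fact (card W) * exp (- real a * \<delta>\<^sup>2 / (2 * c * \<mu>))"
proof (cases "a \<le> card W")
  case False
  then have "{ls \<in> permutations_of_set W. low_suffix_mean v a (\<mu> - \<delta>) ls} = {}"
    by (auto simp: not_low_suffix_mean_short length_finite_permutations_of_set)
  then show ?thesis by (simp only: card.empty) simp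
next
  case True
  define \<eta> where "\<eta> = \<delta> / (c * \<mu>)"
  have \<eta>: "0 \<le> \<eta>" "\<eta> * c \<le> 1"
    using \<open>0 < c\<close> \<open>0 < \<mu>\<close> \<open>0 \<le> \<delta>\<close> \<open>\<delta> \<le> \<mu>\<close> by (auto simp: \<eta>_def field_simps)
  have "card {ls \<in> permutations_of_set W. low_suffix_mean v a (\<mu> - \<delta>) ls}
      = (\<Sum>ls\<in>permutations_of_set W. if low_suffix_mean v a (\<mu> - \<delta>) ls then 1 else 0 :: real)"
    using assms(2) by (simp add: sum.If_cases Int_def)
  also have "\<dots> \<le> exp (\<eta> * a * (\<mu> - \<delta>)) * (\<Sum>ls\<in>permutations_of_set W. exp (- \<eta> * tail_sum v a ls))"
    using count_low_suffix_mean_le \<open>finite W\<close> \<open>1 \<le> a\<close> \<eta> by blast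
  also have "\<dots> = exp (\<eta> * a * (\<mu> - \<delta>)) *
      (\<Sum>ls\<in>permutations_of_set W. exp (- \<eta> * sum_list (map v (take a ls))))"
    by (simp only: sum_tail_sum_eq_sum_prefix_sum[where F = "\<lambda>s. exp (- \<eta> * s)"])
  also have "\<dots> \<le> exp (\<eta> * a * (\<mu> - \<delta>)) * (fact (card W) * exp (- real a * (\<eta> * (1 - \<eta> * c / 2)) * \<mu>))"
    using sum_exp_prefix_sum_le[OF \<eta> v assms(2) True] by (simp add: \<mu>_def)
  also have "\<dots> = fact (card W) * exp (\<eta> * a * (\<mu> - \<delta>) + - real a * (\<eta> * (1 - \<eta> * c / 2)) * \<mu>)"
    by (simp only: exp_add mult_ac)
  also have "\<eta> * a * (\<mu> - \<delta>) + - real a * (\<eta> * (1 - \<eta> * c / 2)) * \<mu> = - real a * \<delta>\<^sup>2 / (2 * c * \<mu>)"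
    using \<open>0 < c\<close> \<open>0 < \<mu>\<close> by (simp add: \<eta>_def field_simps power2_eq_square)
  finally show ?thesis .
qed

lemma inj_on_map_permutes: "inj_on (\<lambda>\<sigma>. map \<sigma> [1..<n+1]) {\<sigma>. \<sigma> permutes {1..n}}"
proof (rule inj_onI)
  fix \<sigma> \<tau> assume \<sigma>: "\<sigma> \<in> {\<sigma>. \<sigma> permutes {1..n}}" and \<tau>: "\<tau> \<in> {\<sigma>. \<sigma> permutes {1..n}}"
    and eq: "map \<sigma> [1..<n+1] = map \<tau> [1..<n+1]"
  show "\<sigma> = \<tau>"
  proof
    fix x
    show "\<sigma> x = \<tau> x"
    proof (cases "x \<in> {1..n}")
      case True
      then have "x \<in> set [1..<n+1]"
        by auto
      with eq show ?thesis
        by (simp only: map_eq_conv)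
    qed (use \<sigma> \<tau> in \<open>simp add: permutes_not_in\<close>)
  qed
qed

lemma map_permutes_in_permutations_of_set:
  assumes "\<sigma> permutes {1..n}"
  shows "map \<sigma> [1..<n+1] \<in> permutations_of_set {1..n}"
proof (rule permutations_of_setI)
  have "set [1..<n+1] = {1..n}"
    by auto
  then show "set (map \<sigma> [1..<n+1]) = {1..n}" "distinct (map \<sigma> [1..<n+1])"
    using permutes_image[OF assms] permutes_inj[OF assms] by (simp_all add: distinct_map inj_on_subset)
qed

lemma prob_permutes_le_union_bound:
  fixes E :: "(nat \<Rightarrow> nat) set" and L :: nat and p :: real
  assumes cover: "\<And>\<sigma>. \<sigma> permutes {1..n} \<Longrightarrow> \<sigma> \<in> E \<Longrightarrow> \<exists>k\<in>{1..L}. Q k (map \<sigma> [1..<n+1])"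
    and count: "\<And>k. k \<in> {1..L} \<Longrightarrow> card {ls \<in> permutations_of_set {1..n}. Q k ls} \<le> fact n * p"
  shows "measure_pmf.prob (pmf_of_set {\<sigma>. \<sigma> permutes {1..n}}) E \<le> L * p"
proof -
  define PS where "PS = {\<sigma>. \<sigma> permutes {1..n}}"
  define B where "B k = {\<sigma> \<in> PS. Q k (map \<sigma> [1..<n+1])}" for k
  have "id \<in> PS"
    by (simp add: PS_def)
  then have PS: "PS \<noteq> {}" "finite PS" "card PS = fact n"
    unfolding PS_def by (auto simp: finite_permutations card_permutations simp del: permutes_id)
  have card_B: "card (B k) \<le> card {ls \<in> permutations_of_set {1..n}. Q k ls}" for k
  proof (rule card_inj_on_le)
    show "inj_on (\<lambda>\<sigma>. map \<sigma> [1..<n+1]) (B k)"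
      using inj_on_map_permutes by (rule inj_on_subset) (auto simp: B_def PS_def)
    show "(\<lambda>\<sigma>. map \<sigma> [1..<n+1]) ` B k \<subseteq> {ls \<in> permutations_of_set {1..n}. Q k ls}"
      unfolding B_def PS_def using map_permutes_in_permutations_of_set by blast
  qed simp
  have "PS \<inter> E \<subseteq> (\<Union>k\<in>{1..L}. B k)"
    using cover by (auto simp: B_def PS_def)
  moreover have "finite (\<Union>k\<in>{1..L}. B k)"
    using PS(2) by (rule finite_subset[rotated]) (auto simp: B_def)
  ultimately have "card (PS \<inter> E) \<le> card (\<Union>k\<in>{1..L}. B k)"
    by (intro card_mono)
  also have "\<dots> \<le> (\<Sum>k\<in>{1..L}. card (B k))"
    by (rule card_UN_le) simp
  finally have "real (card (PS \<inter> E)) \<le> (\<Sum>k\<in>{1..L}. real (card (B k)))"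
    by (simp flip: of_nat_sum)
  also have "\<dots> \<le> (\<Sum>k\<in>{1..L}. fact n * p)"
    using order.trans[OF of_nat_mono[OF card_B] count] by (intro sum_mono)
  finally have "real (card (PS \<inter> E)) / card PS \<le> L * p"
    using PS by (simp add: divide_le_eq mult_ac)
  moreover have "measure_pmf.prob (pmf_of_set PS) E = card (PS \<inter> E) / card PS"
    by (rule measure_pmf_of_set[OF PS(1,2)])
  ultimately show ?thesis
    unfolding PS_def by simp
qed

lemma ereal_sum_eq_minus_infinity:
  fixes g :: "'a \<Rightarrow> ereal"
  assumes "finite I" "\<forall>i\<in>I. g i \<noteq> \<infinity>" "i \<in> I" "g i = -\<infinity>"
  shows "sum g I = -\<infinity>"
proof -
  have "sum g I = g i + sum g (I - {i})"
    using assms by (simp add: sum.remove)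
  moreover have "sum g (I - {i}) \<noteq> \<infinity>"
    using assms by (simp add: sum_Pinfty)
  ultimately show ?thesis
    using assms by simp
qed

lemma feasible_fun_upd_zero:
  assumes "feasible n A b xs" "\<forall>i j. 0 \<le> A t0 $ i $ j" "\<forall>j. 0 \<le> xs t0 $ j"
  shows "feasible n A b (xs(t0 := 0))"
  unfolding feasible_def
proof
  fix i
  have "(\<Sum>t\<in>{1..n}. A t *v (xs(t0 := 0)) t) $ i \<le> (\<Sum>t\<in>{1..n}. A t *v xs t) $ i"
    unfolding sum_component using assms(2,3)
    by (intro sum_mono) (auto simp: matrix_vector_mult_def sum_nonneg)
  also have "\<dots> \<le> b $ i"
    using assms(1) by (simp add: feasible_def)
  finally show "(\<Sum>t\<in>{1..n}. A t *v (xs(t0 := 0)) t) $ i \<le> b $ i" .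
qed

lemma optimal_solution_values:
  fixes n :: nat and f :: "nat \<Rightarrow> real^'k \<Rightarrow> ereal" and xs :: "nat \<Rightarrow> real^'k"
  defines "v \<equiv> \<lambda>t. if t \<in> {1..n} then real_of_ereal (f t (xs t)) else 0"
  assumes f_G: "\<forall>t\<in>{1..n}. classG (f t)" and A_nonneg: "\<forall>t\<in>{1..n}. \<forall>i j. 0 \<le> A t $ i $ j"
    and P: "Pstar n f A b = ereal P" and xs_feas: "feasible n A b xs"
    and xs_opt: "(\<Sum>t\<in>{1..n}. f t (xs t)) = Pstar n f A b"
    and f_le: "\<forall>t\<in>{1..n}. \<forall>x\<in>edom (f t). f t x \<le> ereal c" and "0 \<le> c"
  shows "\<And>t. t \<in> {1..n} \<Longrightarrow> f t (xs t) = ereal (v t)" and "sum v {1..n} = P"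
    and "\<And>t. 0 \<le> v t" and "\<And>t. v t \<le> c"
proof -
  have not_inf: "f t x \<noteq> \<infinity>" if "t \<in> {1..n}" for t x
    using f_G that by (auto simp: classG_def proper_concave_fn_def)
  have sum_f: "(\<Sum>t\<in>{1..n}. f t (xs t)) = ereal P"
    using xs_opt P by simp
  have "f t (xs t) \<noteq> -\<infinity>" if "t \<in> {1..n}" for t
    using ereal_sum_eq_minus_infinity[of "{1..n}" "\<lambda>t. f t (xs t)" t] sum_f not_inf that by auto
  with not_inf show fin: "f t (xs t) = ereal (v t)" if "t \<in> {1..n}" for t
    using that by (auto simp: v_def ereal_real)
  have "(\<Sum>t\<in>{1..n}. f t (xs t)) = (\<Sum>t\<in>{1..n}. ereal (v t))"
    using fin by (intro sum.cong) auto
  then show sum_v: "sum v {1..n} = P"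
    using sum_f by simp
  show "0 \<le> v t0" for t0
  proof (cases "t0 \<in> {1..n}")
    case True
    have "xs t0 \<in> edom (f t0)" "edom (f t0) \<subseteq> {x. \<forall>j. 0 \<le> x $ j}"
      using f_G fin[OF True] True by (auto simp: classG_def edom_def)
    then have "\<forall>j. 0 \<le> xs t0 $ j"
      by blast
    then have feas: "feasible n A b (xs(t0 := 0))"
      using feasible_fun_upd_zero xs_feas A_nonneg True by blast
    have "(\<Sum>t\<in>{1..n}. f t ((xs(t0 := 0)) t)) \<le> ereal P"
      unfolding P[symmetric] Pstar_def by (rule SUP_upper[of "xs(t0 := 0)"]) (use feas in simp)
    moreover have "(\<Sum>t\<in>{1..n}. f t ((xs(t0 := 0)) t)) = (\<Sum>t\<in>{1..n}. ereal (if t = t0 then 0 else v t))"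
      using fin f_G by (intro sum.cong) (auto simp: classG_def)
    moreover have "(\<Sum>t\<in>{1..n}. if t = t0 then 0 else v t) = P - v t0"
      using True sum_v by (simp add: sum.If_cases Diff_eq[symmetric] sum_diff1)
    ultimately show ?thesis
      by simp
  qed (auto simp: v_def)
  show "v t \<le> c" for t
  proof (cases "t \<in> {1..n}")
    case True
    then have "xs t \<in> edom (f t)"
      using fin[OF True] by (simp add: edom_def)
    then have "f t (xs t) \<le> ereal c"
      using f_le True by blast
    then show ?thesis
      using fin[OF True] by simp
  qed (auto simp: v_def \<open>0 \<le> c\<close>)
qed

lemma kappa_bounds:
  fixes n L N0 t :: nat and \<epsilon> :: real
  assumes "0 < \<epsilon>" "\<epsilon> < 1" and L: "real L = log 2 (1 / \<epsilon>)" and N0: "real N0 = n * \<epsilon>"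
    and t: "1 \<le> t" "real t \<le> n * (1 - \<epsilon>)"
  shows "1 \<le> kappa n \<epsilon> t" "kappa n \<epsilon> t \<le> int L" "2 ^ (nat (kappa n \<epsilon> t) - 1) * N0 \<le> n - t"
proof -
  define q where "q = (real n - t) / (n * \<epsilon>)"
  have n\<epsilon>: "0 < n * \<epsilon>"
    using assms by (auto simp: field_simps)
  have q: "1 \<le> q" "q < 1 / \<epsilon>"
    using t n\<epsilon> \<open>0 < \<epsilon>\<close> by (auto simp: q_def field_simps)
  have kappa: "kappa n \<epsilon> t = \<lfloor>log 2 q\<rfloor> + 1"
    by (simp add: kappa_def q_def)
  have "0 \<le> log 2 q" "log 2 q < L"
    unfolding L using q \<open>0 < \<epsilon>\<close> by (auto intro: log_less)
  moreover from this have "\<lfloor>log 2 q\<rfloor> < int L"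
    by (simp add: floor_less_iff)
  ultimately show "1 \<le> kappa n \<epsilon> t" "kappa n \<epsilon> t \<le> int L"
    unfolding kappa by auto
  have "2 ^ nat \<lfloor>log 2 q\<rfloor> = 2 powr \<lfloor>log 2 q\<rfloor>"
    using \<open>0 \<le> log 2 q\<close> by (simp add: powr_realpow[symmetric])
  also have "\<dots> \<le> 2 powr (log 2 q)"
    by simp
  also have "\<dots> = q"
    using q by simp
  finally have "2 ^ nat \<lfloor>log 2 q\<rfloor> * (n * \<epsilon>) \<le> real n - t"
    using n\<epsilon> by (simp add: q_def field_simps)
  then have "real (2 ^ nat \<lfloor>log 2 q\<rfloor> * N0) \<le> real (n - t)"
    using N0 t n\<epsilon> by (simp add: of_nat_diff)
  then have "2 ^ nat \<lfloor>log 2 q\<rfloor> * N0 \<le> n - t"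
    by (simp only: of_nat_le_iff)
  moreover have "nat (kappa n \<epsilon> t) - 1 = nat \<lfloor>log 2 q\<rfloor>"
    unfolding kappa using \<open>0 \<le> log 2 q\<close> by (simp add: nat_add_distrib)
  ultimately show "2 ^ (nat (kappa n \<epsilon> t) - 1) * N0 \<le> n - t"
    by simp
qed

lemma S_stat_less_imp_low_suffix_mean:
  fixes v :: "nat \<Rightarrow> real" and \<delta> :: real
  assumes \<sigma>: "\<sigma> permutes {1..n}" and t: "t \<in> {1..n}" and "a \<le> n - t + 1"
    and v: "\<And>s. s \<in> {1..n} \<Longrightarrow> f s (xs s) = ereal (v s)"
    and S: "S_stat n f xs P \<sigma> t < - \<delta>"
  shows "low_suffix_mean v a (P / n - \<delta>) (map \<sigma> [1..<n+1])"
proof (rule low_suffix_meanI[where j = "t - 1"])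
  let ?ls = "map \<sigma> [1..<n+1]"
  have "sum_list (map v (drop (t - 1) ?ls)) = sum_list (map (v \<circ> \<sigma>) [t..<n+1])"
    using t by (simp add: drop_map)
  also have "\<dots> = (\<Sum>s\<in>{t..n}. v (\<sigma> s))"
  proof -
    have "set [t..<n+1] = {t..n}"
      by auto
    then show ?thesis
      unfolding interv_sum_list_conv_sum_set_nat by simp
  qed
  also have "\<dots> = (\<Sum>s\<in>{t..n}. real_of_ereal (f (\<sigma> s) (xs (\<sigma> s))))"
    using t permutes_in_image[OF \<sigma>] by (intro sum.cong refl) (simp add: v)
  finally have "sum_list (map v (drop (t - 1) ?ls)) / (real n - t + 1) < P / n - \<delta>"
    using S by (simp add: S_stat_def)
  then have "sum_list (map v (drop (t - 1) ?ls)) < (P / n - \<delta>) * (real n - t + 1)"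
    using t by (simp add: divide_less_eq)
  moreover have "real (length ?ls - (t - 1)) = real n - t + 1"
    using t by (simp add: of_nat_diff)
  ultimately show "sum_list (map v (drop (t - 1) ?ls)) < (P / n - \<delta>) * (length ?ls - (t - 1))"
    by simp
qed (use t \<open>a \<le> n - t + 1\<close> in auto)

lemma low_suffix_exponent_bound:
  fixes n N0 k :: nat and \<epsilon> \<gamma> P :: real
  assumes "0 < n" "0 < \<epsilon>" "\<epsilon> < 1" "0 < \<gamma>" "0 < P" "1 \<le> k" and N0: "real N0 = n * \<epsilon>"
  defines "\<delta> \<equiv> P / n * 2 powr (- real k / 2) * sqrt \<epsilon>"
  shows "0 \<le> \<delta>" "\<delta> \<le> P / n"
    and "exp (- real (2 ^ (k - 1) * N0 + 1) * \<delta>\<^sup>2 / (2 * (\<gamma> * P) * (P / n))) \<le> exp (- (\<epsilon> ^ 2) / (4 * \<gamma>))"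
proof -
  have "2 powr (- real k / 2) \<le> 2 powr 0"
    by (rule powr_mono) auto
  moreover have "sqrt \<epsilon> \<le> 1"
    using assms by auto
  ultimately have "2 powr (- real k / 2) * sqrt \<epsilon> \<le> 1 * 1"
    using assms by (intro mult_mono) auto
  then show "0 \<le> \<delta>" "\<delta> \<le> P / n"
    using assms mult_left_mono[of _ 1 "P / n"] by (auto simp: \<delta>_def mult.assoc)
  have "(2::real) ^ (k - 1) = 2 powr (real k - 1)"
    using \<open>1 \<le> k\<close> by (simp add: powr_realpow[symmetric] of_nat_diff)
  then have "(2::real) powr (- real k) * 2 ^ (k - 1) = 2 powr (- real k + (real k - 1))"
    by (simp only: powr_add)
  also have "\<dots> = 1 / 2"
    by (simp add: powr_minus_divide)
  finally have half: "(2::real) powr (- real k) * 2 ^ (k - 1) = 1 / 2" .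
  have "\<delta>\<^sup>2 = (P / n)\<^sup>2 * (2 powr (- real k / 2))\<^sup>2 * \<epsilon>"
    unfolding \<delta>_def power_mult_distrib using assms by simp
  also have "(2 powr (- real k / 2))\<^sup>2 = (2::real) powr (- real k)"
    by (simp add: power2_eq_square powr_add[symmetric])
  finally have "\<epsilon> ^ 2 / (4 * \<gamma>) = 2 ^ (k - 1) * (n * \<epsilon>) * \<delta>\<^sup>2 / (2 * (\<gamma> * P) * (P / n))"
    using assms half by (simp add: field_simps power2_eq_square)
  also have "\<dots> \<le> real (2 ^ (k - 1) * N0 + 1) * \<delta>\<^sup>2 / (2 * (\<gamma> * P) * (P / n))"
    using assms by (intro divide_right_mono mult_right_mono) auto
  finally have "- real (2 ^ (k - 1) * N0 + 1) * \<delta>\<^sup>2 / (2 * (\<gamma> * P) * (P / n)) \<le> - (\<epsilon> ^ 2) / (4 * \<gamma>)"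
    by (simp only: mult_minus_left minus_divide_left neg_le_iff_le)
  then show "exp (- real (2 ^ (k - 1) * N0 + 1) * \<delta>\<^sup>2 / (2 * (\<gamma> * P) * (P / n)))
      \<le> exp (- (\<epsilon> ^ 2) / (4 * \<gamma>))"
    by simp
qed

lemma S_stat_deviation_imp_low_suffix_mean:
  fixes v :: "nat \<Rightarrow> real" and N0 L :: nat
  assumes \<sigma>: "\<sigma> permutes {1..n}" and t: "t \<in> {1..n}" "real t \<le> n * (1 - \<epsilon>)"
    and \<epsilon>: "0 < \<epsilon>" "\<epsilon> < 1" and L: "real L = log 2 (1 / \<epsilon>)" and N0: "real N0 = n * \<epsilon>"
    and v: "\<And>s. s \<in> {1..n} \<Longrightarrow> f s (xs s) = ereal (v s)"
    and S: "S_stat n f xs P \<sigma> t < - (P / n) * 2 powr (- real_of_int (kappa n \<epsilon> t) / 2) * sqrt \<epsilon>"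
  shows "\<exists>k\<in>{1..L}. low_suffix_mean v (2 ^ (k - 1) * N0 + 1) (P / n - P / n * 2 powr (- real k / 2) * sqrt \<epsilon>)
           (map \<sigma> [1..<n+1])"
proof
  define k where "k = nat (kappa n \<epsilon> t)"
  have k: "1 \<le> kappa n \<epsilon> t" "kappa n \<epsilon> t \<le> int L" "2 ^ (k - 1) * N0 + 1 \<le> n - t + 1"
    using kappa_bounds[OF \<epsilon> L N0, of t] t by (auto simp: k_def)
  then show "k \<in> {1..L}"
    by (auto simp: k_def)
  have S': "S_stat n f xs P \<sigma> t < - (P / n * 2 powr (- real k / 2) * sqrt \<epsilon>)"
    using S k by (simp add: k_def)
  show "low_suffix_mean v (2 ^ (k - 1) * N0 + 1) (P / n - P / n * 2 powr (- real k / 2) * sqrt \<epsilon>)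
      (map \<sigma> [1..<n+1])"
    using S_stat_less_imp_low_suffix_mean[where f = f and xs = xs and v = v, OF \<sigma> t(1) k(3) v S'] .
qed

lemma card_low_suffix_mean_deviation_le:
  fixes v :: "nat \<Rightarrow> real" and N0 k :: nat and \<epsilon> \<gamma> P :: real
  assumes "0 < n" "0 < \<epsilon>" "\<epsilon> < 1" "0 < \<gamma>" "0 < P" "1 \<le> k" "real N0 = n * \<epsilon>"
    and v: "sum v {1..n} = P" "\<And>t. 0 \<le> v t" "\<And>t. v t \<le> \<gamma> * P"
  shows "card {ls \<in> permutations_of_set {1..n}.
      low_suffix_mean v (2 ^ (k - 1) * N0 + 1) (P / n - P / n * 2 powr (- real k / 2) * sqrt \<epsilon>) ls}
    \<le> fact n * exp (- (\<epsilon> ^ 2) / (4 * \<gamma>))"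
proof -
  define a where "a = 2 ^ (k - 1) * N0 + 1"
  define \<delta> where "\<delta> = P / n * 2 powr (- real k / 2) * sqrt \<epsilon>"
  note exponent = low_suffix_exponent_bound[OF assms(1-7), folded \<delta>_def a_def]
  have "card {ls \<in> permutations_of_set {1..n}. low_suffix_mean v a (P / n - \<delta>) ls}
      \<le> fact n * exp (- real a * \<delta>\<^sup>2 / (2 * (\<gamma> * P) * (P / n)))"
    using card_low_suffix_mean_le[of "{1..n}" v "\<gamma> * P" a \<delta>] v exponent(1,2) assms(1,4,5)
    by (simp add: a_def)
  also have "\<dots> \<le> fact n * exp (- (\<epsilon> ^ 2) / (4 * \<gamma>))"
    using exponent(3) by (intro mult_left_mono) auto
  finally show ?thesis
    by (simp add: a_def \<delta>_def)
qed

theorem mainTheorem7: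
  fixes n L :: nat
    and b :: "real^'m"
    and f :: "nat \<Rightarrow> real^'k \<Rightarrow> ereal"
    and A :: "nat \<Rightarrow> real^'k^'m"
    and P \<gamma> \<epsilon> :: real
    and xs :: "nat \<Rightarrow> real^'k"
    and y :: "real^'m"
  assumes n_pos: "0 < n"
    and b_pos: "\<forall>i. 0 < b $ i"
    and f_G: "\<forall>t\<in>{1..n}. classG (f t)"
    and A_nonneg: "\<forall>t\<in>{1..n}. \<forall>i j. 0 \<le> A t $ i $ j"
    and P_def: "Pstar n f A b = ereal P"
    and P_pos: "0 < P"
    and gamma_pos: "0 < \<gamma>"
    and gamma_A: "\<forall>t\<in>{1..n}. \<forall>x. 0 \<le> f t x \<longrightarrow> (\<forall>i. (A t *v x) $ i / b $ i \<le> \<gamma>)"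
    and gamma_f: "\<forall>t\<in>{1..n}. \<forall>x\<in>edom (f t). f t x \<le> ereal (\<gamma> * P)"
    and eps: "0 < \<epsilon>" "\<epsilon> < 1"
    and L_def: "real L = log 2 (1 / \<epsilon>)"
    and n_eps_int: "real n * \<epsilon> \<in> \<int>"
    and xs_feas: "feasible n A b xs"
    and xs_opt: "(\<Sum>t\<in>{1..n}. f t (xs t)) = Pstar n f A b"
    and y_nonneg: "\<forall>i. 0 \<le> y $ i"
    and compl_slack: "\<forall>i. (\<Sum>t\<in>{1..n}. A t *v xs t) $ i < b $ i \<longrightarrow> y $ i = 0"
    and supergrad: "\<forall>t\<in>{1..n}. \<forall>z. f t z \<le> f t (xs t) + ereal ((transpose (A t) *v y) \<bullet> (z - xs t))"
  shows "measure_pmf.prob (pmf_of_set {\<sigma>. \<sigma> permutes {1..n}})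
           {\<sigma>. \<exists>t\<in>{1..n}. real t \<le> real n * (1 - \<epsilon>) \<and>
                 S_stat n f xs P \<sigma> t < - (P / real n) * 2 powr (- real_of_int (kappa n \<epsilon> t) / 2) * sqrt \<epsilon>}
         \<le> real L * exp (- (\<epsilon> ^ 2) / (4 * \<gamma>))"
proof -
  define v where "v t = (if t \<in> {1..n} then real_of_ereal (f t (xs t)) else 0)" for t
  have "0 \<le> \<gamma> * P"
    using gamma_pos P_pos by simp
  note v = optimal_solution_values[OF f_G A_nonneg P_def xs_feas xs_opt gamma_f this, folded v_def]
  have "real n * \<epsilon> \<in> \<nat>"
    using n_eps_int eps by (simp add: Nats_altdef2)
  then obtain N0 where N0: "real N0 = real n * \<epsilon>"
    by (auto elim: Nats_cases)
  show ?thesis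
  proof (rule prob_permutes_le_union_bound)
    fix \<sigma> assume "\<sigma> permutes {1..n}" and "\<sigma> \<in> {\<sigma>. \<exists>t\<in>{1..n}. real t \<le> real n * (1 - \<epsilon>) \<and>
      S_stat n f xs P \<sigma> t < - (P / real n) * 2 powr (- real_of_int (kappa n \<epsilon> t) / 2) * sqrt \<epsilon>}"
    then show "\<exists>k\<in>{1..L}. low_suffix_mean v (2 ^ (k - 1) * N0 + 1)
        (P / n - P / n * 2 powr (- real k / 2) * sqrt \<epsilon>) (map \<sigma> [1..<n+1])"
      using S_stat_deviation_imp_low_suffix_mean[where f = f and xs = xs and v = v, OF _ _ _ eps L_def N0 v(1)]
      by blast
  next
    fix k assume "k \<in> {1..L}"
    then show "card {ls \<in> permutations_of_set {1..n}. low_suffix_mean v (2 ^ (k - 1) * N0 + 1)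
        (P / n - P / n * 2 powr (- real k / 2) * sqrt \<epsilon>) ls} \<le> fact n * exp (- (\<epsilon> ^ 2) / (4 * \<gamma>))"
      using card_low_suffix_mean_deviation_le[OF n_pos eps gamma_pos P_pos _ N0 v(2-4)] by simp
  qed
qed

end
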